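(* Let $n\ge2$ and let $K\in\mathcal S_n$ with $\mathrm{Outrad}(K)<1$. Then \[ \mathrm{ext}_c(K)=\{\,y-u:\ y\in\partial K^c,\ u\in N_{K^c}(y),\ \mathbb R^+u\text{ is an extremal ray of the cone }\mathbb R^+N_{K^c}(y)\,\}. \]
   Context: $B(x,r)$ is the closed Euclidean ball. For $A\subseteq\mathbb R^n$, $A^c=\bigcap_{x\in A}B(x,1)$ (with $\emptyset^c=\mathbb R^n$) and $\mathrm{conv}_c(A)=A^{cc}$. $\mathcal S_n$ is the class of all sets of the form $\bigcap_{x\in A}B(x,1)$, $A\subseteq\mathbb R^n$. $\mathrm{Outrad}(K)$ is the minimal $R$ such that $K\subseteq B(z,R)$ for some $z$. A point $x\in K$ is $c$-extremal for $K$ if $x\in\mathrm{conv}_c(\{y,z\})$ with $y,z\in K$ implies $y=x$ or $z=x$; $\mathrm{ext}_c(K)$ is the set of $c$-extremal points. For a convex body $T$ and $z\in\partial T$, $N_T(z)$ is the set of unit outer normals at $z$, and $\mathbb R^+N_T(z)$ is the outer normal cone. *)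

theory Defs
  imports "HOL-Analysis.Analysis"
begin

text \<open>c-dual: intersection of closed unit balls centred at the points of A
  (the empty intersection is the whole space).\<close>
definition cdual :: "'a::euclidean_space set \<Rightarrow> 'a set" where
  "cdual A = (\<Inter>x\<in>A. cball x 1)"

definition conv_c :: "'a::euclidean_space set \<Rightarrow> 'a set" where
  "conv_c A = cdual (cdual A)"

definition S_class :: "'a::euclidean_space set set" where
  "S_class = {cdual A | A. True}"

text \<open>Circumradius: the minimal R with K contained in some ball of radius R
  (extended-real valued, so that unbounded sets get infinity).\<close>
definition Outrad :: "'a::euclidean_space set \<Rightarrow> ereal" where
  "Outrad K = Inf {ereal R | R. \<exists>z. K \<subseteq> cball z R}"

definition c_extremal :: "'a::euclidean_space set \<Rightarrow> 'a \<Rightarrow> bool" where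
  "c_extremal K x \<longleftrightarrow> x \<in> K \<and>
     (\<forall>y z. y \<in> K \<longrightarrow> z \<in> K \<longrightarrow> x \<in> conv_c {y, z} \<longrightarrow> y = x \<or> z = x)"

definition ext_c :: "'a::euclidean_space set \<Rightarrow> 'a set" where
  "ext_c K = {x. c_extremal K x}"

definition unit_normals :: "'a::euclidean_space set \<Rightarrow> 'a \<Rightarrow> 'a set" where
  "unit_normals T z = {u. norm u = 1 \<and> (\<forall>w\<in>T. inner u (w - z) \<le> 0)}"

definition pos_hull :: "'a::euclidean_space set \<Rightarrow> 'a set" where
  "pos_hull N = {c *\<^sub>R u | c u. c \<ge> 0 \<and> u \<in> N}"

definition ray :: "'a::euclidean_space \<Rightarrow> 'a set" where
  "ray u = {c *\<^sub>R u | c. c \<ge> 0}"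

definition extremal_ray :: "'a::euclidean_space \<Rightarrow> 'a set \<Rightarrow> bool" where
  "extremal_ray u C \<longleftrightarrow> u \<noteq> 0 \<and> ray u face_of C"

end

theory Submission
  imports Defs
begin

text \<open>
  For y \<in> K^c let G(y) (far_directions K y below) be the set of unit vectors g with
  y - g \<in> K, i.e. the directions from y to the points of K at distance exactly 1. Each
  g \<in> G(y) is an outer normal of K^c at y. Conversely, a unit normal outside the convex cone
  spanned by G(y) could be separated from G(y), and moving y slightly in the separating
  direction would keep it in K^c; so N(y) = G(y). Because Outrad K < 1, G(y) lies in an open
  half-space, so the cone R^+G(y) is pointed; because K is spindle convex, it is convex: for
  unit vectors g, h \<in> G(y) and a unit vector m = \<alpha> g + \<beta> h with \<alpha>, \<beta> \<ge> 0, the point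
  y - m lies in the spindle conv_c {y - g, y - h}.

  A decomposition
  of u by other directions g, h \<in> G(y) puts x into the spindle of y - g and y - h; conversely,
  if x lies in the spindle of p, q \<in> K with p, q \<noteq> x, then u is not in the cone spanned by the
  directions to p and q, and separating it again moves y to a point of {p, q}^c farther than 1
  from x. Finally, a c-extremal point x is not interior to K = (K^c)^c, so some y \<in> K^c has
  distance 1 from x, and such a y lies on the boundary of K^c.
\<close>

lemma separate_point_from_closed_convex_cone:
  fixes C :: "'a::euclidean_space set"
  assumes "closed C" "convex_cone C" "u \<notin> C"
  obtains a where "inner a u < 0" "\<forall>x\<in>C. 0 \<le> inner a x"
proof -
  obtain a b where ab: "inner a u < b" "\<forall>x\<in>C. b < inner a x"
    using separating_hyperplane_closed_point assms by (metis convex_cone_def)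
  then have "b < 0"
    using convex_cone_contains_0[OF assms(2)] by auto
  have "0 \<le> inner a x" if "x \<in> C" for x
  proof (rule ccontr)
    assume neg: "\<not> 0 \<le> inner a x"
    then have "(b / inner a x) *\<^sub>R x \<in> C"
      using \<open>b < 0\<close> that assms(2) by (simp add: convex_cone_scaleR divide_nonpos_neg)
    then show False
      using ab(2) neg by fastforce
  qed
  then show ?thesis
    using ab(1) \<open>b < 0\<close> by (intro that[of a]) auto
qed

lemma separate_from_pointed_convex_cone_hull:
  fixes S :: "'a::euclidean_space set"
  assumes "compact S" and d: "\<forall>s\<in>S. inner d s \<le> -1" and u: "u \<notin> convex_cone hull S"
  shows "\<exists>e \<epsilon>. 0 < \<epsilon> \<and> 0 < inner e u \<and> (\<forall>s\<in>S. inner e s \<le> -\<epsilon>)"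
proof (cases "S = {}")
  case True
  then show ?thesis
    using u by (intro exI[of _ u] exI[of _ 1]) auto
next
  case False
  have "convex hull S \<subseteq> {x. inner d x \<le> -1}"
    using d by (intro hull_minimal) (auto simp: convex_halfspace_le)
  then have "0 \<notin> convex hull S"
    by auto
  then have "closed (convex_cone hull S)"
    using closed_conic_hull_strong[of "convex hull S"] compact_convex_hull[OF assms(1)] False
    by (simp add: convex_cone_hull_separate_nonempty)
  then obtain a where "inner a u < 0" "\<forall>x\<in>convex_cone hull S. 0 \<le> inner a x"
    by (rule separate_point_from_closed_convex_cone[OF _ convex_cone_convex_cone_hull u])
  then have a: "inner a u < 0" "\<forall>s\<in>S. 0 \<le> inner a s"
    by (simp_all add: hull_inc)
  define \<epsilon> where "\<epsilon> = - inner a u / (2 * (\<bar>inner d u\<bar> + 1))"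
  have "0 < \<epsilon>"
    unfolding \<epsilon>_def using a(1) by (intro divide_pos_pos) auto
  have "\<epsilon> * \<bar>inner d u\<bar> \<le> \<epsilon> * (\<bar>inner d u\<bar> + 1)"
    using \<open>0 < \<epsilon>\<close> by simp
  also have "\<dots> = - inner a u / 2"
    using abs_ge_zero[of "inner d u"] unfolding \<epsilon>_def by (simp add: field_simps)
  finally have "0 < inner (\<epsilon> *\<^sub>R d - a) u"
    using a(1) \<open>0 < \<epsilon>\<close> abs_ge_minus_self[of "inner d u"]
      mult_left_mono[of "- inner d u" "\<bar>inner d u\<bar>" \<epsilon>]
    by (simp add: inner_diff_left)
  moreover have "inner (\<epsilon> *\<^sub>R d - a) s \<le> - \<epsilon>" if "s \<in> S" for s
    using bspec[OF a(2) that] d that mult_left_mono[of "inner d s" "-1" \<epsilon>] \<open>0 < \<epsilon>\<close>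
    by (simp add: inner_diff_left)
  ultimately show ?thesis
    using \<open>0 < \<epsilon>\<close> by blast
qed

lemma compact_subset_ball_imp_cball:
  fixes K :: "'a::metric_space set"
  assumes "compact K" "K \<subseteq> ball y r"
  obtains m where "m < r" "K \<subseteq> cball y m"
proof (cases "K = {}")
  case True
  then show ?thesis
    using that[of "r - 1"] by simp
next
  case False
  have "continuous_on K (dist y)"
    by (intro continuous_intros)
  then obtain k where "k \<in> K" "\<forall>k'\<in>K. dist y k' \<le> dist y k"
    using continuous_attains_sup[OF assms(1) False] by blast
  then show ?thesis
    using assms(2) by (intro that[of "dist y k"]) auto
qed

lemma norm_add_scaleR_le_1:
  fixes v e :: "'a::real_inner"
  assumes "norm v \<le> 1" "0 \<le> t" "2 * inner e v \<le> - c" "t * inner e e \<le> c"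
  shows "norm (v + t *\<^sub>R e) \<le> 1"
proof -
  have "(norm (v + t *\<^sub>R e))\<^sup>2 = (norm v)\<^sup>2 + t * (2 * inner e v) + t * (t * inner e e)"
    by (simp add: power2_norm_eq_inner inner_commute algebra_simps)
  also have "\<dots> \<le> 1 + t * - c + t * c"
    using power_le_one[OF norm_ge_zero assms(1), of 2]
      mult_left_mono[OF assms(3) assms(2)] mult_left_mono[OF assms(4) assms(2)]
    by linarith
  finally show ?thesis
    using abs_square_le_1[of "norm (v + t *\<^sub>R e)"] by simp
qed

lemma face_of_conic_iff:
  assumes "conic C" "conic F" "convex F" "F \<subseteq> C"
  shows "F face_of C \<longleftrightarrow> (\<forall>a\<in>C. \<forall>b\<in>C. a + b \<in> F \<longrightarrow> a \<in> F)"
proof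
  assume face: "F face_of C"
  show "\<forall>a\<in>C. \<forall>b\<in>C. a + b \<in> F \<longrightarrow> a \<in> F"
  proof (intro ballI impI)
    fix a b assume "a \<in> C" "b \<in> C" "a + b \<in> F"
    show "a \<in> F"
    proof (cases "a = b")
      case True
      then have "a = (1/2) *\<^sub>R (a + b)"
        by (simp flip: scaleR_2)
      then show ?thesis
        using conicD[OF assms(2) \<open>a + b \<in> F\<close>, of "1/2"] by simp
    next
      case False
      moreover have "midpoint (2 *\<^sub>R a) (2 *\<^sub>R b) = a + b"
        by (simp add: midpoint_def scaleR_add_right)
      ultimately have "a + b \<in> open_segment (2 *\<^sub>R a) (2 *\<^sub>R b)"
        using midpoint_in_open_segment[of "2 *\<^sub>R a" "2 *\<^sub>R b"] by simp
      then have "2 *\<^sub>R a \<in> F"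
        using face_ofD[OF face] conicD[OF assms(1)] \<open>a \<in> C\<close> \<open>b \<in> C\<close> \<open>a + b \<in> F\<close> by simp
      then show ?thesis
        using conicD[OF assms(2), of "2 *\<^sub>R a" "1/2"] by simp
    qed
  qed
next
  assume sum: "\<forall>a\<in>C. \<forall>b\<in>C. a + b \<in> F \<longrightarrow> a \<in> F"
  have "a \<in> F" if abx: "a \<in> C" "b \<in> C" "x \<in> F" "x \<in> open_segment a b" for a b x
  proof -
    obtain \<theta> where "0 < \<theta>" "\<theta> < 1" "x = (1 - \<theta>) *\<^sub>R a + \<theta> *\<^sub>R b"
      using abx(4) by (auto simp: in_segment)
    moreover have "(1 - \<theta>) *\<^sub>R a \<in> C" "\<theta> *\<^sub>R b \<in> C"
      using conicD[OF assms(1)] abx \<open>0 < \<theta>\<close> \<open>\<theta> < 1\<close> by simp_all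
    ultimately have "(1 - \<theta>) *\<^sub>R a \<in> F"
      using sum abx(3) by blast
    then show ?thesis
      using conicD[OF assms(2), of "(1 - \<theta>) *\<^sub>R a" "1 / (1 - \<theta>)"] \<open>\<theta> < 1\<close> by simp
  qed
  then show "F face_of C"
    unfolding face_of_def using assms(3,4) by (metis open_segment_commute)
qed

lemma face_of_conic_add_memD:
  assumes "conic C" "F face_of C" "conic F" "a \<in> C" "b \<in> C" "a + b \<in> F"
  shows "a \<in> F \<and> b \<in> F"
  using face_of_conic_iff[OF assms(1,3) face_of_imp_convex face_of_imp_subset] assms(2,4-6)
  by (metis add.commute)

lemma convex_cone_hull_Int_conic_face:
  assumes C: "convex_cone C" and F: "F face_of C" "conic F" and "S \<subseteq> C"
  shows "convex_cone hull S \<inter> F \<subseteq> convex_cone hull (S \<inter> F)"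
proof -
  have sum: "a \<in> F \<and> b \<in> F" if "a \<in> C" "b \<in> C" "a + b \<in> F" for a b
    using face_of_conic_add_memD[OF _ F(1,2) that] C by (simp add: convex_cone_def)
  let ?H = "convex_cone hull (S \<inter> F)"
  define T where "T = {v \<in> C. v \<in> F \<longrightarrow> v \<in> ?H}"
  have H: "convex_cone ?H"
    by (rule convex_cone_convex_cone_hull)
  have "convex_cone T"
    unfolding convex_cone_iff
  proof (intro conjI ballI allI impI)
    show "0 \<in> T"
      using C H by (simp add: T_def convex_cone_contains_0)
  next
    fix a b assume a: "a \<in> T" and b: "b \<in> T"
    then have "a \<in> C" "b \<in> C"
      by (auto simp: T_def)
    moreover have "a + b \<in> ?H" if "a + b \<in> F"
      using sum[OF \<open>a \<in> C\<close> \<open>b \<in> C\<close> that] a b H by (simp add: T_def convex_cone_add)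
    ultimately show "a + b \<in> T"
      using C by (simp add: T_def convex_cone_add)
  next
    fix a and c :: real assume a: "a \<in> T" and "0 \<le> c"
    then have "c *\<^sub>R a \<in> C"
      using C by (simp add: T_def convex_cone_scaleR)
    moreover have "c *\<^sub>R a \<in> ?H" if "c *\<^sub>R a \<in> F"
    proof (cases "c = 0")
      case True
      then show ?thesis
        using H by (simp add: convex_cone_contains_0)
    next
      case False
      then have "a \<in> F"
        using conicD[OF F(2) that, of "1 / c"] \<open>0 \<le> c\<close> by simp
      then show ?thesis
        using a H \<open>0 \<le> c\<close> by (simp add: T_def convex_cone_scaleR)
    qed
    ultimately show "c *\<^sub>R a \<in> T"
      by (simp add: T_def)
  qed
  moreover have "S \<subseteq> T"
    using \<open>S \<subseteq> C\<close> by (auto simp: T_def hull_inc)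
  ultimately have "convex_cone hull S \<subseteq> T"
    by (intro hull_minimal)
  then show ?thesis
    by (auto simp: T_def)
qed

lemma combination_neq_0_if_inner_neg:
  assumes "inner d g < 0" "inner d h < 0" "0 < \<alpha>" "0 \<le> \<beta>"
  shows "\<alpha> *\<^sub>R g + \<beta> *\<^sub>R h \<noteq> 0"
proof -
  have "inner d (\<alpha> *\<^sub>R g + \<beta> *\<^sub>R h) < 0"
    using assms by (simp add: inner_add_right add_neg_nonpos mult_pos_neg mult_nonneg_nonpos)
  then show ?thesis
    by auto
qed

lemma pos_hull_eq_conic_hull: "pos_hull N = conic hull N"
  by (simp add: pos_hull_def conic_hull_explicit)

lemma ray_eq_conic_hull: "ray u = conic hull {u}"
  by (auto simp: ray_def conic_hull_explicit)

lemma conic_ray: "conic (ray u)"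
  by (simp add: ray_eq_conic_hull conic_conic_hull)

lemma convex_ray: "convex (ray u)"
  by (simp add: ray_eq_conic_hull convex_conic_hull)

lemma ray_eq_if_norm_eq:
  assumes "g \<in> ray u" "norm g = norm u"
  shows "g = u"
proof -
  obtain c where "g = c *\<^sub>R u" "0 \<le> c"
    using assms(1) by (auto simp: ray_def)
  with assms(2) show ?thesis
    by (cases "u = 0") auto
qed

lemma extremal_ray_notin_convex_cone_hull:
  assumes "convex_cone C" "ray u face_of C" "S \<subseteq> C"
    and "u \<noteq> 0" "u \<notin> S" "\<forall>s\<in>S. norm s = norm u"
  shows "u \<notin> convex_cone hull S"
proof
  assume "u \<in> convex_cone hull S"
  moreover have "u \<in> ray u"
    by (simp add: ray_eq_conic_hull hull_inc)
  ultimately have "u \<in> convex_cone hull (S \<inter> ray u)"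
    using convex_cone_hull_Int_conic_face[OF assms(1,2) conic_ray assms(3)] by blast
  moreover have "S \<inter> ray u = {}"
    using assms(5,6) ray_eq_if_norm_eq by blast
  ultimately show False
    using assms(4) by simp
qed

lemma mem_cdual: "w \<in> cdual A \<longleftrightarrow> (\<forall>a\<in>A. dist a w \<le> 1)"
  by (auto simp: cdual_def)

lemma cdual_antimono: "A \<subseteq> B \<Longrightarrow> cdual B \<subseteq> cdual A"
  by (auto simp: cdual_def)

lemma subset_cdual_cdual: "A \<subseteq> cdual (cdual A)"
  by (auto simp: mem_cdual) (metis dist_commute)

lemma cdual_cdual_cdual [simp]: "cdual (cdual (cdual A)) = cdual A"
  by (meson cdual_antimono subset_cdual_cdual subset_antisym)

lemma closed_cdual: "closed (cdual A)"
  unfolding cdual_def by auto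

lemma convex_cdual: "convex (cdual A)"
  unfolding cdual_def by (auto intro!: convex_INT)

lemma S_class_iff: "K \<in> S_class \<longleftrightarrow> cdual (cdual K) = K"
  by (auto simp: S_class_def)

lemma convex_hull_subset_conv_c: "convex hull A \<subseteq> conv_c A"
  unfolding conv_c_def by (intro hull_minimal subset_cdual_cdual convex_cdual)

lemma conv_c_subset_S_class:
  assumes "K \<in> S_class" "p \<in> K" "q \<in> K"
  shows "conv_c {p, q} \<subseteq> K"
  using assms cdual_antimono[of "{p, q}" K] cdual_antimono[of _ "cdual {p, q}"]
  unfolding S_class_iff conv_c_def by blast

lemma Outrad_lessE:
  assumes "Outrad K < ereal r"
  obtains z R where "R < r" "K \<subseteq> cball z R"
  using assms by (auto simp: Outrad_def Inf_less_iff)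

lemma compact_cdual:
  fixes A :: "'a::euclidean_space set"
  assumes "A \<noteq> {}"
  shows "compact (cdual A)"
proof -
  obtain a where "a \<in> A"
    using assms by blast
  then have "cdual A \<subseteq> cball a 1"
    by (auto simp: mem_cdual)
  then show ?thesis
    using closed_cdual bounded_subset[OF bounded_cball] by (auto simp: compact_eq_bounded_closed)
qed

lemma dist_unit_shift_le_1_iff:
  fixes g y w :: "'a::euclidean_space"
  assumes "norm g = 1"
  shows "dist (y - g) w \<le> 1 \<longleftrightarrow> inner (w - y) (w - y) + 2 * inner g (w - y) \<le> 0"
proof -
  have "inner g g = 1"
    using assms by (simp add: dot_square_norm)
  then have "(dist (y - g) w)\<^sup>2 = inner (w - y) (w - y) + 2 * inner g (w - y) + 1"
    by (simp add: dist_norm power2_norm_eq_inner algebra_simps inner_commute)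
  moreover have "dist (y - g) w \<le> 1 \<longleftrightarrow> (dist (y - g) w)\<^sup>2 \<le> 1"
    using abs_square_le_1[of "dist (y - g) w"] by simp
  ultimately show ?thesis
    by simp
qed

lemma unit_combination_mem_conv_c:
  fixes g h y :: "'a::euclidean_space"
  assumes g: "norm g = 1" and h: "norm h = 1" and "0 \<le> \<alpha>" "0 \<le> \<beta>"
    and m: "norm (\<alpha> *\<^sub>R g + \<beta> *\<^sub>R h) = 1"
  shows "y - (\<alpha> *\<^sub>R g + \<beta> *\<^sub>R h) \<in> conv_c {y - g, y - h}"
proof -
  define m where "m = \<alpha> *\<^sub>R g + \<beta> *\<^sub>R h"
  have "1 \<le> \<alpha> + \<beta>"
    using norm_triangle_ineq[of "\<alpha> *\<^sub>R g" "\<beta> *\<^sub>R h"] assms by simp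
  have "dist (y - m) w \<le> 1" if w: "w \<in> cdual {y - g, y - h}" for w
  proof -
    define v where "v = w - y"
    have gv: "inner v v + 2 * inner g v \<le> 0" and hv: "inner v v + 2 * inner h v \<le> 0"
      using w g h by (auto simp: mem_cdual v_def dist_unit_shift_le_1_iff)
    have "\<alpha> * (2 * inner g v) \<le> \<alpha> * - inner v v"
      by (rule mult_left_mono[OF _ \<open>0 \<le> \<alpha>\<close>]) (use gv in linarith)
    moreover have "\<beta> * (2 * inner h v) \<le> \<beta> * - inner v v"
      by (rule mult_left_mono[OF _ \<open>0 \<le> \<beta>\<close>]) (use hv in linarith)
    ultimately have "inner v v + 2 * inner m v \<le> (1 - (\<alpha> + \<beta>)) * inner v v"
      by (simp add: m_def algebra_simps)
    also have "\<dots> \<le> 0"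
      using \<open>1 \<le> \<alpha> + \<beta>\<close> by (simp add: mult_nonpos_nonneg)
    finally show ?thesis
      using m by (simp add: dist_unit_shift_le_1_iff m_def v_def)
  qed
  then show ?thesis
    by (auto simp: conv_c_def mem_cdual dist_commute m_def)
qed

definition far_directions :: "'a::euclidean_space set \<Rightarrow> 'a \<Rightarrow> 'a set" where
  "far_directions K y = {g. norm g = 1 \<and> y - g \<in> K}"

lemma compact_far_directions:
  fixes K :: "'a::euclidean_space set"
  assumes "compact K"
  shows "compact (far_directions K y)"
proof -
  have "far_directions K y = (\<lambda>k. y - k) ` K \<inter> sphere 0 1"
    by (force simp: far_directions_def)
  moreover have "compact ((\<lambda>k. y - k) ` K)"
    by (intro compact_continuous_image continuous_intros assms)
  ultimately show ?thesis
    by (simp add: compact_Int_closed)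
qed

lemma far_directions_subset_unit_normals: "far_directions K y \<subseteq> unit_normals (cdual K) y"
proof
  fix g assume g: "g \<in> far_directions K y"
  have "inner g (w - y) \<le> 0" if "w \<in> cdual K" for w
  proof -
    have "norm g = 1" "dist (y - g) w \<le> 1"
      using g that by (auto simp: far_directions_def mem_cdual)
    then have "inner (w - y) (w - y) + 2 * inner g (w - y) \<le> 0"
      by (simp add: dist_unit_shift_le_1_iff)
    then show ?thesis
      using inner_ge_zero[of "w - y"] by linarith
  qed
  then show "g \<in> unit_normals (cdual K) y"
    using g by (simp add: far_directions_def unit_normals_def)
qed

lemma far_directions_pointed:
  fixes K :: "'a::euclidean_space set"
  assumes "K \<subseteq> cball z R" "R < 1"
  shows "\<exists>d. \<forall>g\<in>far_directions K y. inner d g \<le> -1"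
proof (cases "R < 0")
  case True
  then have "far_directions K y = {}"
    using assms(1) by (auto simp: far_directions_def)
  then show ?thesis by simp
next
  case False
  then have R: "R\<^sup>2 < 1"
    using assms(2) by (simp add: abs_square_less_1)
  have "2 * inner (z - y) g \<le> R\<^sup>2 - 1" if g: "g \<in> far_directions K y" for g
  proof -
    have "norm g = 1" "dist z (y - g) \<le> R"
      using g assms(1) by (auto simp: far_directions_def)
    then have "(norm (z - y + g))\<^sup>2 \<le> R\<^sup>2"
      by (simp add: dist_norm power_mono algebra_simps)
    moreover have "(norm (z - y + g))\<^sup>2 = (norm (z - y))\<^sup>2 + 2 * inner (z - y) g + 1"
      using \<open>norm g = 1\<close>
      by (simp add: power2_norm_eq_inner inner_add_left inner_add_right inner_commute
          flip: power2_norm_eq_inner[of g])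
    ultimately show ?thesis
      using zero_le_power2[of "norm (z - y)"] by linarith
  qed
  then have "\<forall>g\<in>far_directions K y. inner ((2 / (1 - R\<^sup>2)) *\<^sub>R (z - y)) g \<le> -1"
    using R by (simp add: divide_simps)
  then show ?thesis ..
qed

lemma convex_conic_hull_far_directions:
  assumes "K \<in> S_class"
  shows "convex (conic hull (far_directions K y))"
proof (rule convexI)
  let ?G = "far_directions K y"
  fix a b and s t :: real
  assume "a \<in> conic hull ?G" "b \<in> conic hull ?G" "0 \<le> s" "0 \<le> t" "s + t = 1"
  then obtain \<alpha> g \<beta> h where a: "a = \<alpha> *\<^sub>R g" "0 \<le> \<alpha>" "g \<in> ?G"
    and b: "b = \<beta> *\<^sub>R h" "0 \<le> \<beta>" "h \<in> ?G"
    by (auto simp: conic_hull_explicit)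
  define v where "v = s *\<^sub>R a + t *\<^sub>R b"
  show "s *\<^sub>R a + t *\<^sub>R b \<in> conic hull ?G"
  proof (cases "v = 0")
    case True
    then show ?thesis
      using a(3) by (auto simp: v_def)
  next
    case False
    define m where "m = (1 / norm v) *\<^sub>R v"
    have "norm m = 1"
      using False by (simp add: m_def)
    moreover have m: "m = (s * \<alpha> / norm v) *\<^sub>R g + (t * \<beta> / norm v) *\<^sub>R h"
      by (simp add: m_def v_def a b scaleR_add_right)
    ultimately have "y - m \<in> conv_c {y - g, y - h}"
      using a b \<open>0 \<le> s\<close> \<open>0 \<le> t\<close>
      by (simp only: m) (rule unit_combination_mem_conv_c, auto simp: far_directions_def)
    also have "\<dots> \<subseteq> K"
      using assms a(3) b(3) by (intro conv_c_subset_S_class) (auto simp: far_directions_def)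
    finally have "m \<in> ?G"
      using \<open>norm m = 1\<close> by (simp add: far_directions_def)
    moreover have "v = norm v *\<^sub>R m"
      using False by (simp add: m_def)
    ultimately show ?thesis
      by (metis v_def conic_conic_hull conic_mul hull_inc norm_ge_zero)
  qed
qed

lemma cdual_margin:
  fixes K :: "'a::euclidean_space set"
  assumes K: "compact K" and y: "y \<in> cdual K" and "0 < \<epsilon>"
    and e: "\<forall>g\<in>far_directions K y. inner e g \<le> -\<epsilon>"
  obtains m where "m < 1" "\<forall>k\<in>K. -\<epsilon>/2 \<le> inner e (y - k) \<longrightarrow> dist y k \<le> m"
proof -
  define K' where "K' = K \<inter> {k. -\<epsilon>/2 \<le> inner e (y - k)}"
  have "compact K'"
    unfolding K'_def by (intro compact_Int_closed K closed_Collect_le continuous_intros)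
  moreover have "K' \<subseteq> ball y 1"
  proof
    fix k assume k: "k \<in> K'"
    then have "dist y k \<le> 1"
      using y by (auto simp: K'_def mem_cdual dist_commute)
    moreover have "dist y k \<noteq> 1"
      using k e \<open>0 < \<epsilon>\<close> by (force simp: K'_def far_directions_def dist_norm)
    ultimately show "k \<in> ball y 1"
      by simp
  qed
  ultimately obtain m where "m < 1" "K' \<subseteq> cball y m"
    by (rule compact_subset_ball_imp_cball)
  then show ?thesis
    by (intro that[of m]) (auto simp: K'_def)
qed

lemma cdual_step:
  fixes K :: "'a::euclidean_space set"
  assumes K: "compact K" and y: "y \<in> cdual K" and "0 < \<epsilon>"
    and e: "\<forall>g\<in>far_directions K y. inner e g \<le> -\<epsilon>"
  shows "\<exists>t>0. y + t *\<^sub>R e \<in> cdual K"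
proof -
  obtain m where "m < 1" and m: "\<forall>k\<in>K. -\<epsilon>/2 \<le> inner e (y - k) \<longrightarrow> dist y k \<le> m"
    using cdual_margin[OF assms] by blast
  define t where "t = min ((1 - m) / (norm e + 1)) (\<epsilon> / (inner e e + 1))"
  have "0 < t"
    using \<open>m < 1\<close> \<open>0 < \<epsilon>\<close> by (simp add: t_def add_nonneg_pos)
  have "t * (norm e + 1) \<le> 1 - m" "t * (inner e e + 1) \<le> \<epsilon>"
    unfolding t_def by (simp_all add: add_nonneg_pos min_le_iff_disj flip: pos_le_divide_eq)
  then have t: "t * norm e \<le> 1 - m" "t * inner e e \<le> \<epsilon>"
    using \<open>0 < t\<close> by (simp_all add: algebra_simps)
  have "dist k (y + t *\<^sub>R e) \<le> 1" if "k \<in> K" for k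
  proof (cases "-\<epsilon>/2 \<le> inner e (y - k)")
    case True
    then have "dist y k \<le> m"
      using m that by blast
    then show ?thesis
      using dist_triangle[of k "y + t *\<^sub>R e" y] t(1) \<open>0 < t\<close>
      by (simp add: dist_commute dist_norm)
  next
    case False
    then have "2 * inner e (y - k) \<le> - \<epsilon>"
      by simp
    moreover have "norm (y - k) \<le> 1"
      using y that by (simp add: mem_cdual dist_norm norm_minus_commute)
    ultimately have "norm (y - k + t *\<^sub>R e) \<le> 1"
      using \<open>0 < t\<close> t(2) by (intro norm_add_scaleR_le_1) auto
    then show ?thesis
      by (simp add: dist_norm norm_minus_commute algebra_simps)
  qed
  then show ?thesis
    using \<open>0 < t\<close> by (auto simp: mem_cdual)
qed

lemma cdual_escape:
  fixes K :: "'a::euclidean_space set"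
  assumes "compact K" "y \<in> cdual K" "\<forall>g\<in>far_directions K y. inner d g \<le> -1"
    and "v \<notin> convex_cone hull (far_directions K y)"
  obtains e t where "0 < t" "0 < inner e v" "y + t *\<^sub>R e \<in> cdual K"
  using separate_from_pointed_convex_cone_hull[OF compact_far_directions[OF assms(1)] assms(3,4)]
    cdual_step[OF assms(1,2)] by metis

lemma unit_normals_eq_far_directions:
  fixes K :: "'a::euclidean_space set"
  assumes K: "K \<in> S_class" "K \<subseteq> cball z R" "R < 1" and y: "y \<in> cdual K"
  shows "unit_normals (cdual K) y = far_directions K y"
proof
  let ?G = "far_directions K y"
  show "unit_normals (cdual K) y \<subseteq> ?G"
  proof
    fix v assume v: "v \<in> unit_normals (cdual K) y"
    have "compact K"
      using K closed_cdual[of "cdual K"] bounded_subset[OF bounded_cball]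
      by (simp add: S_class_iff compact_eq_bounded_closed)
    obtain d where "\<forall>g\<in>?G. inner d g \<le> -1"
      using far_directions_pointed[OF K(2,3)] by blast
    have "v \<in> convex_cone hull ?G"
    proof (rule ccontr)
      assume "v \<notin> convex_cone hull ?G"
      then obtain e t where "0 < t" "0 < inner e v" "y + t *\<^sub>R e \<in> cdual K"
        using cdual_escape \<open>compact K\<close> y \<open>\<forall>g\<in>?G. inner d g \<le> -1\<close> by blast
      moreover have "inner v ((y + t *\<^sub>R e) - y) \<le> 0"
        using v \<open>y + t *\<^sub>R e \<in> cdual K\<close> by (auto simp: unit_normals_def)
      ultimately show False
        by (simp add: inner_commute mult_le_0_iff)
    qed
    moreover have "v \<noteq> 0"
      using v by (auto simp: unit_normals_def)
    ultimately have "?G \<noteq> {}"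
      by auto
    then have "convex_cone hull ?G \<subseteq> conic hull ?G"
      using K(1) by (intro hull_minimal hull_subset)
        (simp add: convex_cone_def conic_conic_hull convex_conic_hull_far_directions conic_hull_eq_empty)
    then obtain c g where "v = c *\<^sub>R g" "0 \<le> c" "g \<in> ?G"
      using \<open>v \<in> convex_cone hull ?G\<close> by (auto simp: conic_hull_explicit)
    moreover from this have "c = 1"
      using v by (simp add: unit_normals_def far_directions_def)
    ultimately show "v \<in> ?G"
      by simp
  qed
qed (rule far_directions_subset_unit_normals)

lemma c_extremal_unit_combination:
  fixes K :: "'a::euclidean_space set"
  assumes x: "c_extremal K x" and "g \<in> far_directions K y" "h \<in> far_directions K y"
    and "0 \<le> \<alpha>" "0 \<le> \<beta>" "norm (y - x) = 1" and u: "y - x = \<alpha> *\<^sub>R g + \<beta> *\<^sub>R h"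
  shows "g = y - x \<or> h = y - x"
proof -
  have "y - (\<alpha> *\<^sub>R g + \<beta> *\<^sub>R h) \<in> conv_c {y - g, y - h}"
    using assms by (intro unit_combination_mem_conv_c) (auto simp: far_directions_def)
  then have "x \<in> conv_c {y - g, y - h}"
    by (simp flip: u)
  then have "y - g = x \<or> y - h = x"
    using assms(1-3) unfolding c_extremal_def far_directions_def by auto
  then show ?thesis
    by auto
qed

lemma far_direction_of_c_extremal_is_extreme:
  fixes K :: "'a::euclidean_space set"
  assumes x: "c_extremal K x" and u: "y - x \<in> far_directions K y"
    and d: "\<forall>g\<in>far_directions K y. inner d g < 0"
    and "a \<in> conic hull far_directions K y" "b \<in> conic hull far_directions K y"
    and "a + b \<in> ray (y - x)"
  shows "a \<in> ray (y - x)"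
proof -
  let ?G = "far_directions K y"
  define u where "u = y - x"
  obtain \<alpha> g \<beta> h \<mu> where a: "a = \<alpha> *\<^sub>R g" "0 \<le> \<alpha>" "g \<in> ?G"
    and b: "b = \<beta> *\<^sub>R h" "0 \<le> \<beta>" "h \<in> ?G" and ab: "a + b = \<mu> *\<^sub>R u" "0 \<le> \<mu>"
    using assms(4-6) unfolding conic_hull_explicit ray_def u_def by blast
  show ?thesis
  proof (cases "\<alpha> = 0")
    case True
    then show ?thesis
      using a by (auto simp: ray_def)
  next
    case False
    then have "0 < \<alpha>"
      using a(2) by simp
    then have "a + b \<noteq> 0"
      using combination_neq_0_if_inner_neg d a b by blast
    then have "0 < \<mu>"
      using ab by auto
    then have "u = (1 / \<mu>) *\<^sub>R (a + b)"
      using ab by simp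
    then have "y - x = (\<alpha> / \<mu>) *\<^sub>R g + (\<beta> / \<mu>) *\<^sub>R h"
      using a b by (simp add: scaleR_add_right u_def)
    moreover have "norm (y - x) = 1"
      using u by (simp add: far_directions_def)
    ultimately have "g = y - x \<or> h = y - x"
      using c_extremal_unit_combination[OF x a(3) b(3)] a(2) b(2) \<open>0 < \<mu>\<close> by simp
    then consider "g = u" | "h = u"
      by (auto simp: u_def)
    then show ?thesis
    proof cases
      case 1
      then show ?thesis
        using a by (auto simp: ray_def u_def)
    next
      case 2
      then have "a = (\<mu> - \<beta>) *\<^sub>R u"
        using ab b by (simp add: algebra_simps)
      moreover have "\<alpha> *\<^sub>R g + (\<beta> - \<mu>) *\<^sub>R u = 0"
        using \<open>a = (\<mu> - \<beta>) *\<^sub>R u\<close> a by (simp add: algebra_simps)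
      then have "0 \<le> \<mu> - \<beta>"
        using combination_neq_0_if_inner_neg[of d g u \<alpha> "\<beta> - \<mu>"] d a(3) u \<open>0 < \<alpha>\<close>
        by (force simp: u_def)
      ultimately show ?thesis
        by (auto simp: ray_def u_def)
    qed
  qed
qed

lemma c_extremal_imp_extremal_ray:
  fixes K :: "'a::euclidean_space set"
  assumes K: "K \<in> S_class" "K \<subseteq> cball z R" "R < 1" and y: "y \<in> cdual K"
    and x: "c_extremal K x" and "dist x y = 1"
  shows "extremal_ray (y - x) (pos_hull (unit_normals (cdual K) y))"
proof -
  let ?G = "far_directions K y"
  have u: "y - x \<in> ?G"
    using x \<open>dist x y = 1\<close>
    by (simp add: far_directions_def c_extremal_def dist_norm norm_minus_commute)
  obtain d where "\<forall>g\<in>?G. inner d g \<le> -1"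
    using far_directions_pointed[OF K(2,3)] by blast
  then have d: "\<forall>g\<in>?G. inner d g < 0"
    by fastforce
  have "ray (y - x) \<subseteq> conic hull ?G"
    unfolding ray_eq_conic_hull using u by (intro hull_mono) simp
  then have "ray (y - x) face_of conic hull ?G"
    using face_of_conic_iff[OF conic_conic_hull conic_ray convex_ray]
      far_direction_of_c_extremal_is_extreme[OF x u d] by blast
  moreover have "y - x \<noteq> 0"
    using u by (auto simp: far_directions_def)
  ultimately show ?thesis
    using unit_normals_eq_far_directions[OF K y]
    by (simp add: extremal_ray_def pos_hull_eq_conic_hull)
qed

lemma extremal_ray_imp_c_extremal:
  fixes K :: "'a::euclidean_space set"
  assumes K: "K \<in> S_class" "K \<subseteq> cball z R" "R < 1" and y: "y \<in> cdual K"
    and u: "u \<in> unit_normals (cdual K) y"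
    and ray: "extremal_ray u (pos_hull (unit_normals (cdual K) y))"
  shows "c_extremal K (y - u)"
proof -
  let ?G = "far_directions K y"
  have G: "unit_normals (cdual K) y = ?G"
    by (rule unit_normals_eq_far_directions[OF K y])
  have uG: "u \<in> ?G"
    using u G by simp
  have face: "ray u face_of conic hull ?G"
    using ray G by (simp add: extremal_ray_def pos_hull_eq_conic_hull)
  have cone: "convex_cone (conic hull ?G)"
    using uG K(1)
    by (auto simp: convex_cone_def conic_conic_hull convex_conic_hull_far_directions conic_hull_eq_empty)
  have "p = y - u \<or> q = y - u" if pq: "p \<in> K" "q \<in> K" "y - u \<in> conv_c {p, q}" for p q
  proof (rule ccontr)
    assume "\<not> (p = y - u \<or> q = y - u)"
    let ?S = "far_directions {p, q} y"
    have "u \<notin> convex_cone hull ?S"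
      using \<open>\<not> (p = y - u \<or> q = y - u)\<close> pq uG
      by (intro extremal_ray_notin_convex_cone_hull[OF cone face])
        (auto simp: far_directions_def intro: hull_inc)
    moreover have "{p, q} \<subseteq> cball z R"
      using K(2) pq by auto
    then obtain d where "\<forall>g\<in>?S. inner d g \<le> -1"
      using far_directions_pointed K(3) by blast
    moreover have "compact {p, q}"
      by (simp add: finite_imp_compact)
    moreover have "y \<in> cdual {p, q}"
      using y pq by (auto simp: mem_cdual)
    ultimately obtain e t where "0 < t" "0 < inner e u" "y + t *\<^sub>R e \<in> cdual {p, q}"
      using cdual_escape by blast
    \<comment> \<open>Moving from y to y + t e increases the distance from y - u beyond 1.\<close>
    then have "dist (y + t *\<^sub>R e) (y - u) \<le> 1"
      using pq(3) unfolding conv_c_def mem_cdual[of "y - u"] by blast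
    then have "inner (t *\<^sub>R e) (t *\<^sub>R e) + 2 * (t * inner u e) \<le> 0"
      using uG by (simp add: far_directions_def dist_unit_shift_le_1_iff dist_commute)
    moreover have "0 < t * inner u e"
      using \<open>0 < t\<close> \<open>0 < inner e u\<close> by (simp add: inner_commute)
    ultimately show False
      using inner_ge_zero[of "t *\<^sub>R e"] by linarith
  qed
  moreover have "y - u \<in> K"
    using uG by (simp add: far_directions_def)
  ultimately show ?thesis
    by (auto simp: c_extremal_def)
qed

lemma c_extremal_not_interior:
  fixes K :: "'a::euclidean_space set"
  assumes "c_extremal K x"
  shows "x \<notin> interior K"
proof
  assume "x \<in> interior K"
  then obtain \<epsilon> where "0 < \<epsilon>" "ball x \<epsilon> \<subseteq> K"
    by (auto simp: mem_interior)
  obtain b :: 'a where b: "norm b = \<epsilon> / 2"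
    using vector_choose_size[of "\<epsilon> / 2"] \<open>0 < \<epsilon>\<close> by auto
  have "x + b \<in> K" "x - b \<in> K"
    using \<open>ball x \<epsilon> \<subseteq> K\<close> b \<open>0 < \<epsilon>\<close> by (auto simp: dist_norm)
  moreover have "x \<in> conv_c {x + b, x - b}"
  proof -
    have "x = midpoint (x + b) (x - b)"
      by (simp add: midpoint_def scaleR_add_right flip: scaleR_2)
    then have "x \<in> convex hull {x + b, x - b}"
      by (metis midpoint_in_closed_segment segment_convex_hull)
    then show ?thesis
      using convex_hull_subset_conv_c by blast
  qed
  ultimately have "x + b = x \<or> x - b = x"
    using assms unfolding c_extremal_def by blast
  then show False
    using b \<open>0 < \<epsilon>\<close> by auto
qed

lemma mem_interior_cdual:
  fixes L :: "'a::euclidean_space set"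
  assumes "compact L" "x \<in> cdual L" "\<forall>y\<in>L. dist x y \<noteq> 1"
  shows "x \<in> interior (cdual L)"
proof -
  have "L \<subseteq> ball x 1"
    using assms(2,3) by (force simp: mem_cdual dist_commute)
  then obtain m where "m < 1" "L \<subseteq> cball x m"
    using assms(1) compact_subset_ball_imp_cball by blast
  have "ball x (1 - m) \<subseteq> cdual L"
  proof
    fix w assume w: "w \<in> ball x (1 - m)"
    have "dist a w \<le> 1" if "a \<in> L" for a
    proof -
      have "dist a w \<le> dist x a + dist x w"
        by (metis dist_commute dist_triangle)
      then show ?thesis
        using w that \<open>L \<subseteq> cball x m\<close> by auto
    qed
    then show "w \<in> cdual L"
      by (simp add: mem_cdual)
  qed
  then show ?thesis
    using \<open>m < 1\<close> unfolding mem_interior by (intro exI[of _ "1 - m"]) simp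
qed

lemma far_point_in_frontier:
  fixes L :: "'a::euclidean_space set"
  assumes x: "x \<in> cdual L" and "y \<in> L" "dist x y = 1"
  shows "y \<in> frontier L"
proof -
  have "y \<notin> interior L"
  proof
    assume "y \<in> interior L"
    then obtain \<epsilon> where "0 < \<epsilon>" "ball y \<epsilon> \<subseteq> L"
      by (auto simp: mem_interior)
    define w where "w = y + (\<epsilon> / 2) *\<^sub>R (y - x)"
    have "norm (y - x) = 1"
      using \<open>dist x y = 1\<close> by (simp add: dist_norm norm_minus_commute)
    then have "w \<in> L"
      using \<open>0 < \<epsilon>\<close> \<open>ball y \<epsilon> \<subseteq> L\<close> by (auto simp: w_def dist_norm)
    moreover have "w - x = (1 + \<epsilon> / 2) *\<^sub>R (y - x)"
      by (simp add: w_def algebra_simps)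
    then have "1 < dist w x"
      using \<open>0 < \<epsilon>\<close> \<open>norm (y - x) = 1\<close> by (simp add: dist_norm)
    ultimately show False
      using x by (force simp: mem_cdual)
  qed
  then show ?thesis
    using \<open>y \<in> L\<close> closure_subset by (auto simp: frontier_def)
qed

lemma c_extremal_far_point:
  fixes K :: "'a::euclidean_space set"
  assumes "K \<in> S_class" "x \<in> K" "c_extremal K x"
  obtains y where "y \<in> cdual K" "dist x y = 1"
proof -
  have "x \<in> cdual (cdual K)" "x \<notin> interior (cdual (cdual K))"
    using assms c_extremal_not_interior by (simp_all add: S_class_iff)
  moreover have "compact (cdual K)"
    using assms(2) by (intro compact_cdual) blast
  ultimately show ?thesis
    using mem_interior_cdual that by blast
qed

lemma far_direction_mem_unit_normals:
  assumes "x \<in> K" "dist x y = 1"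
  shows "y - x \<in> unit_normals (cdual K) y"
  using assms far_directions_subset_unit_normals[of K y]
  by (force simp: far_directions_def dist_norm norm_minus_commute)

lemma c_extremal_imp_frontier_extremal_ray:
  fixes K :: "'a::euclidean_space set"
  assumes K: "K \<in> S_class" "K \<subseteq> cball z R" "R < 1" and x: "c_extremal K x"
  shows "\<exists>y u. x = y - u \<and> y \<in> frontier (cdual K) \<and> u \<in> unit_normals (cdual K) y
           \<and> extremal_ray u (pos_hull (unit_normals (cdual K) y))"
proof -
  have "x \<in> K"
    using x by (simp add: c_extremal_def)
  then obtain y where y: "y \<in> cdual K" "dist x y = 1"
    using c_extremal_far_point K(1) x by blast
  have "x \<in> cdual (cdual K)"
    using \<open>x \<in> K\<close> K(1) by (simp add: S_class_iff)
  then have "y \<in> frontier (cdual K)"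
    using far_point_in_frontier y by blast
  then show ?thesis
    using far_direction_mem_unit_normals[OF \<open>x \<in> K\<close> y(2)]
      c_extremal_imp_extremal_ray[OF K y(1) x y(2)]
    by (intro exI[of _ y] exI[of _ "y - x"]) simp
qed

theorem proposition4p9:
  fixes K :: "'a::euclidean_space set"
  assumes "DIM('a) \<ge> 2"
    and "K \<in> S_class"
    and "Outrad K < 1"
  shows "ext_c K = {y - u | y u. y \<in> frontier (cdual K) \<and> u \<in> unit_normals (cdual K) y
                       \<and> extremal_ray u (pos_hull (unit_normals (cdual K) y))}"
proof -
  obtain z R where "K \<subseteq> cball z R" "R < 1"
    using Outrad_lessE[of K 1] assms(3) by (metis one_ereal_def)
  with assms(2) have K: "K \<in> S_class" "K \<subseteq> cball z R" "R < 1"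
    by auto
  show ?thesis
    using c_extremal_imp_frontier_extremal_ray[OF K] extremal_ray_imp_c_extremal[OF K]
      frontier_subset_closed[OF closed_cdual]
    unfolding ext_c_def by blast
qed

end
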